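(* For every $(C,v)\in\mathrm{SO}(3)\times\mathbb{R}$ with $C=(c_{jk})$, $$\rho_1(\mathrm{Id},(C,v))=\rho_2(\mathrm{Id},(\tilde C,v)),\quad \tilde C=\begin{pmatrix}c_{11}\cos v+c_{12}\sin v&c_{12}\cos v-c_{11}\sin v&c_{13}\\ c_{21}\cos v+c_{22}\sin v&c_{22}\cos v-c_{21}\sin v&c_{23}\\ c_{31}\cos v+c_{32}\sin v&c_{32}\cos v-c_{31}\sin v&c_{33}\end{pmatrix}.$$
   Context: $\mathrm{SO}(3)\times\mathbb{R}$ is the group of $4\times4$ matrices $(C,v)=\mathrm{diag}(C,e^v)$, $C\in\mathrm{SO}(3)$, $v\in\mathbb{R}$, with identity $\mathrm{Id}$. Let $E_1=e_{32}-e_{23}$, $E_2=e_{13}-e_{31}$, $E_3=e_{21}-e_{12}$, $E_4=e_{44}$ ($4\times4$ matrix units). $\rho_1$ (resp. $\rho_2$) is the left-invariant sub-Riemannian metric given by the left-invariant distribution with value $\mathrm{span}(E_1,E_4-E_3,E_2)$ (resp. $\mathrm{span}(E_1,E_4,E_2)$) at $\mathrm{Id}$ and the inner product making these three vectors orthonormal. *)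

theory Defs
  imports "HOL-Analysis.Analysis"
begin

text \<open>The group SO(3) x R: an element (C,v) is represented by the pair of a 3x3 real
matrix C (with C orthogonal, det C = 1) and v :: real; it stands for diag(C, e^v).
The Lie algebra element sum of the 3x3 block Omega and w e44 acts on the v-component
by v' = w (since d/dt e^v = e^v w).\<close>

definition E1 :: "real^3^3" where
  "E1 = vector [vector [0,0,0], vector [0,0,-1], vector [0,1,0]]"

definition E2 :: "real^3^3" where
  "E2 = vector [vector [0,0,1], vector [0,0,0], vector [-1,0,0]]"

definition E3 :: "real^3^3" where
  "E3 = vector [vector [0,-1,0], vector [1,0,0], vector [0,0,0]]"

text \<open>A horizontal curve for a left-invariant distribution spanned at Id by
three orthonormal vectors X1, X2, X3, where X_i = (A-part, b-part):
control u :: [0,1] -> R^3 (L^1), and g' = g (u1 X1 + u2 X2 + u3 X3) in integral form.\<close>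

definition horizontal ::
  "(real^3 \<Rightarrow> real^3^3) \<Rightarrow> (real^3 \<Rightarrow> real) \<Rightarrow>
   (real \<Rightarrow> real^3^3) \<Rightarrow> (real \<Rightarrow> real) \<Rightarrow> (real \<Rightarrow> real^3) \<Rightarrow> bool" where
  "horizontal A b C v u \<longleftrightarrow>
     u absolutely_integrable_on {0..1} \<and>
     (\<forall>t\<in>{0..1}. ((\<lambda>s. C s ** A (u s)) has_integral (C t - C 0)) {0..t} \<and>
                   ((\<lambda>s. b (u s)) has_integral (v t - v 0)) {0..t})"

definition sr_dist ::
  "(real^3 \<Rightarrow> real^3^3) \<Rightarrow> (real^3 \<Rightarrow> real) \<Rightarrow> real^3^3 \<Rightarrow> real \<Rightarrow> real" where
  "sr_dist A b C1 v1 = Inf {integral {0..1} (\<lambda>s. norm (u s)) | C v u.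
       horizontal A b C v u \<and> C 0 = mat 1 \<and> v 0 = 0 \<and> C 1 = C1 \<and> v 1 = v1}"

text \<open>rho1: frame E1, E4 - E3, E2.\<close>
definition rho1 :: "real^3^3 \<Rightarrow> real \<Rightarrow> real" where
  "rho1 = sr_dist (\<lambda>u. (u$1) *\<^sub>R E1 + (u$2) *\<^sub>R (- E3) + (u$3) *\<^sub>R E2) (\<lambda>u. u$2)"

text \<open>rho2: frame E1, E4, E2.\<close>
definition rho2 :: "real^3^3 \<Rightarrow> real \<Rightarrow> real" where
  "rho2 = sr_dist (\<lambda>u. (u$1) *\<^sub>R E1 + (u$3) *\<^sub>R E2) (\<lambda>u. u$2)"

definition Ctilde :: "real^3^3 \<Rightarrow> real \<Rightarrow> real^3^3" where
  "Ctilde C v = (\<chi> j k. if k = 1 then C$j$1 * cos v + C$j$2 * sin v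
                       else if k = 2 then C$j$2 * cos v - C$j$1 * sin v
                       else C$j$3)"

end

theory Submission
  imports Defs
begin

(* Let R(t) be the rotation by the angle t about the third axis, so that R' = R E3 and R commutes
   with E3. If (C, v) is horizontal for rho1 with control u, then v' = u2 and
     (C R(v))' = C R(v) (R(v)^-1 (u1 E1 - u2 E3 + u3 E2) R(v) + u2 E3) = C R(v) (w1 E1 + w3 E2),
   where w arises from u by rotating (u1, u3) through the angle -v. So (C R(v), v) is horizontal
   for rho2 with a control of the same norm, and right multiplication by R(-v) undoes this. Both
   distances are therefore infima of the same set of lengths, the endpoint (C, v) corresponding to
   (C R(v), v) = (Ctilde C v, v).
   Controls are only integrable, so the product and chain rules behind the formula for (C R(v))'
   are proved for primitives of absolutely integrable functions, from a uniform estimate of the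
   error on short intervals. *)

section \<open>Primitives of absolutely integrable functions\<close>

lemma bilinear_matrix_matrix_mult: "bilinear ((**) :: real^'n^'m \<Rightarrow> real^'p^'n \<Rightarrow> real^'p^'m)"
  by (auto simp: bilinear_def linear_iff vec_eq_iff matrix_matrix_mult_def
      sum.distrib sum_distrib_left algebra_simps)

lemma bilinear_matrix_vector_mult: "bilinear ((*v) :: real^'n^'m \<Rightarrow> real^'n \<Rightarrow> real^'m)"
  by (auto simp: bilinear_def linear_iff matrix_vector_right_distrib matrix_vector_mult_add_rdistrib
      matrix_vector_mult_scaleR scaleR_matrix_vector_assoc)

lemma bilinear_scaleR: "bilinear (\<lambda>(c::real) (x::'a::real_vector). c *\<^sub>R x)"
  by (simp add: bilinear_def linear_iff algebra_simps scaleR_add_left)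

lemma absolutely_integrable_bilinear_continuous_left:
  fixes f :: "real \<Rightarrow> 'a::euclidean_space" and g :: "real \<Rightarrow> 'b::euclidean_space"
    and h :: "'a \<Rightarrow> 'b \<Rightarrow> 'c::euclidean_space"
  assumes "bilinear h" "continuous_on {a..b} f" "g absolutely_integrable_on {a..b}"
  shows "(\<lambda>x. h (f x) (g x)) absolutely_integrable_on {a..b}"
proof (rule absolutely_integrable_bounded_measurable_product[OF assms(1) _ _ _ assms(3)])
  show "f \<in> borel_measurable (lebesgue_on {a..b})"
    by (rule continuous_imp_measurable_on_sets_lebesgue[OF assms(2)]) auto
  show "bounded (f ` {a..b})"
    by (intro compact_imp_bounded compact_continuous_image assms(2)) auto
qed auto

lemma absolutely_integrable_bilinear_continuous_right:
  fixes f :: "real \<Rightarrow> 'a::euclidean_space" and g :: "real \<Rightarrow> 'b::euclidean_space"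
    and h :: "'b \<Rightarrow> 'a \<Rightarrow> 'c::euclidean_space"
  assumes "bilinear h" "continuous_on {a..b} f" "g absolutely_integrable_on {a..b}"
  shows "(\<lambda>x. h (g x) (f x)) absolutely_integrable_on {a..b}"
proof -
  have "bilinear (\<lambda>x y. h y x)" using assms(1) by (simp add: bilinear_def)
  from absolutely_integrable_bilinear_continuous_left[OF this assms(2,3)] show ?thesis .
qed

definition primitive_on :: "real \<Rightarrow> real \<Rightarrow> (real \<Rightarrow> 'a::real_normed_vector) \<Rightarrow> (real \<Rightarrow> 'a) \<Rightarrow> bool"
  where "primitive_on a b g G \<longleftrightarrow> (\<forall>x\<in>{a..b}. (g has_integral G x - G a) {a..x})"

lemma primitive_onD:
  fixes g :: "real \<Rightarrow> 'a::banach"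
  assumes "primitive_on a b g G" "a \<le> x" "x \<le> y" "y \<le> b"
  shows "(g has_integral G y - G x) {x..y}"
proof -
  have gx: "(g has_integral G x - G a) {a..x}" and gy: "(g has_integral G y - G a) {a..y}"
    using assms by (auto simp: primitive_on_def)
  have gay: "g integrable_on {a..y}"
    using gy by (rule has_integral_integrable)
  have "g integrable_on {x..y}"
    by (rule integrable_subinterval_real[OF gay]) (use assms in auto)
  moreover have "integral {a..x} g + integral {x..y} g = integral {a..y} g"
    by (rule Henstock_Kurzweil_Integration.integral_combine) (use assms gay in auto)
  moreover have "integral {a..x} g = G x - G a" "integral {a..y} g = G y - G a"
    using gx gy by (simp_all add: integral_unique)
  ultimately show ?thesis
    by (metis add_diff_cancel_left' diff_diff_eq2 diff_add_cancel has_integral_integral)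
qed

lemma primitive_on_continuous:
  fixes g :: "real \<Rightarrow> 'a::banach"
  assumes "primitive_on a b g G"
  shows "continuous_on {a..b} G"
proof (cases "a \<le> b")
  case True
  have "g integrable_on {a..b}" using primitive_onD[OF assms order_refl True order_refl] by blast
  then have "continuous_on {a..b} (\<lambda>x. G a + integral {a..x} g)"
    by (intro continuous_intros indefinite_integral_continuous_1)
  moreover have "G a + integral {a..x} g = G x" if "x \<in> {a..b}" for x
  proof -
    have "integral {a..x} g = G x - G a"
      using assms that unfolding primitive_on_def by (blast intro: integral_unique)
    then show ?thesis by simp
  qed
  ultimately show ?thesis by (rule continuous_on_eq)
qed simp

lemma primitive_on_add:
  assumes "primitive_on a b f F" "primitive_on a b g G"
  shows "primitive_on a b (\<lambda>s. f s + g s) (\<lambda>s. F s + G s)"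
  using assms by (auto simp: primitive_on_def add_diff_add intro: has_integral_add)

lemma primitive_on_scaleR_left:
  assumes "primitive_on a b f F"
  shows "primitive_on a b (\<lambda>s. f s *\<^sub>R M) (\<lambda>s. F s *\<^sub>R M)"
  using assms by (auto simp: primitive_on_def scaleR_diff_left[symmetric] intro: has_integral_scaleR_left)

lemma primitive_on_add_const:
  assumes "primitive_on a b f F"
  shows "primitive_on a b f (\<lambda>s. c + F s)"
  using assms by (simp add: primitive_on_def)

lemma norm_increment_le_of_local_estimate:
  fixes F h :: "real \<Rightarrow> 'a::banach"
  assumes ab: "a \<le> b" and h: "h integrable_on {a..b}" and m: "m integrable_on {a..b}"
    and "\<delta> > 0"
    and loc: "\<And>x y. a \<le> x \<Longrightarrow> x \<le> y \<Longrightarrow> y \<le> b \<Longrightarrow> y - x < \<delta> \<Longrightarrow>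
      norm (F y - F x - integral {x..y} h) \<le> e * integral {x..y} m"
  shows "norm (F b - F a - integral {a..b} h) \<le> e * integral {a..b} m"
proof -
  obtain n :: nat where n: "(b - a) / \<delta> < n" using reals_Archimedean2 by blast
  moreover have "0 \<le> (b - a) / \<delta>" using ab \<open>\<delta> > 0\<close> by simp
  ultimately have "n > 0" by linarith
  define d where "d = (b - a) / n"
  have "d \<ge> 0" "d < \<delta>" "a + real n * d = b"
    using ab n \<open>n > 0\<close> \<open>\<delta> > 0\<close> by (simp_all add: d_def field_simps)
  have "norm (F (a + real k * d) - F a - integral {a..a + real k * d} h)
      \<le> e * integral {a..a + real k * d} m" if "k \<le> n" for k
    using that
  proof (induction k)
    case 0
    then show ?case by simp
  next
    case (Suc k)
    let ?x = "a + real k * d" and ?y = "a + real (Suc k) * d"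
    have "real (Suc k) * d \<le> real n * d"
      using Suc.prems \<open>d \<ge> 0\<close> by (intro mult_right_mono) auto
    then have xy: "a \<le> ?x" "?x \<le> ?y" "?y \<le> b"
      using \<open>d \<ge> 0\<close> \<open>a + real n * d = b\<close> by (auto simp: algebra_simps)
    have hsplit: "integral {a..?y} h = integral {a..?x} h + integral {?x..?y} h"
      by (rule Henstock_Kurzweil_Integration.integral_combine[OF xy(1,2), symmetric])
        (rule integrable_subinterval_real[OF h], use xy in auto)
    have msplit: "integral {a..?y} m = integral {a..?x} m + integral {?x..?y} m"
      by (rule Henstock_Kurzweil_Integration.integral_combine[OF xy(1,2), symmetric])
        (rule integrable_subinterval_real[OF m], use xy in auto)
    have "norm (F ?y - F a - integral {a..?y} h)
        \<le> norm (F ?x - F a - integral {a..?x} h) + norm (F ?y - F ?x - integral {?x..?y} h)"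
      using norm_triangle_ineq[of "F ?x - F a - integral {a..?x} h" "F ?y - F ?x - integral {?x..?y} h"]
      unfolding hsplit by (simp add: algebra_simps)
    also have "\<dots> \<le> e * integral {a..?x} m + e * integral {?x..?y} m"
    proof (rule add_mono)
      show "norm (F ?x - F a - integral {a..?x} h) \<le> e * integral {a..?x} m"
        using Suc by simp
      show "norm (F ?y - F ?x - integral {?x..?y} h) \<le> e * integral {?x..?y} m"
        by (rule loc[OF xy]) (use \<open>d < \<delta>\<close> in \<open>simp add: algebra_simps\<close>)
    qed
    finally show ?case unfolding msplit by (simp add: distrib_left)
  qed
  from this[of n] show ?thesis by (simp add: \<open>a + real n * d = b\<close>)
qed

lemma primitive_on_of_oscillation_bound:
  fixes F h :: "real \<Rightarrow> 'a::banach" and K :: "real \<Rightarrow> 'b::metric_space"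
  assumes h: "h integrable_on {a..b}" and m: "m integrable_on {a..b}" and K: "continuous_on {a..b} K"
    and bound: "\<And>x y \<eta>. a \<le> x \<Longrightarrow> x \<le> y \<Longrightarrow> y \<le> b \<Longrightarrow>
      (\<And>s. s \<in> {x..y} \<Longrightarrow> dist (K x) (K s) \<le> \<eta> \<and> dist (K y) (K s) \<le> \<eta>) \<Longrightarrow>
      norm (F y - F x - integral {x..y} h) \<le> \<eta> * integral {x..y} m"
  shows "primitive_on a b h F"
  unfolding primitive_on_def
proof
  fix t assume t: "t \<in> {a..b}"
  have ht: "h integrable_on {a..t}" and mt: "m integrable_on {a..t}"
    using t by (auto intro: integrable_subinterval_real[OF h] integrable_subinterval_real[OF m])
  have "uniformly_continuous_on {a..b} K"
    using K by (rule compact_uniformly_continuous) simp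
  have "norm (F t - F a - integral {a..t} h) \<le> e" if "e > 0" for e
  proof -
    define \<eta> where "\<eta> = e / (\<bar>integral {a..t} m\<bar> + 1)"
    have "\<eta> > 0" using \<open>e > 0\<close> by (simp add: \<eta>_def add_nonneg_pos)
    then obtain \<delta> where "\<delta> > 0" and \<delta>: "\<And>x x'. x \<in> {a..b} \<Longrightarrow> x' \<in> {a..b} \<Longrightarrow>
        dist x' x < \<delta> \<Longrightarrow> dist (K x') (K x) < \<eta>"
      using \<open>uniformly_continuous_on {a..b} K\<close> unfolding uniformly_continuous_on_def by metis
    have "norm (F t - F a - integral {a..t} h) \<le> \<eta> * integral {a..t} m"
    proof (rule norm_increment_le_of_local_estimate[OF _ ht mt \<open>\<delta> > 0\<close>])
      fix x y assume "a \<le> x" "x \<le> y" "y \<le> t" "y - x < \<delta>"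
      then show "norm (F y - F x - integral {x..y} h) \<le> \<eta> * integral {x..y} m"
        using t \<delta>[of x] \<delta>[of y] by (intro bound) (auto simp: dist_real_def dist_commute less_imp_le)
    qed (use t in simp)
    also have "\<dots> \<le> \<eta> * (\<bar>integral {a..t} m\<bar> + 1)"
      using \<open>\<eta> > 0\<close> by (intro mult_left_mono) auto
    finally show ?thesis by (simp add: \<eta>_def)
  qed
  then have "F t - F a = integral {a..t} h"
    using field_le_epsilon[of "norm (F t - F a - integral {a..t} h)" 0] by simp
  then show "(h has_integral F t - F a) {a..t}"
    using ht by (simp add: has_integral_integral)
qed

lemma norm_bilinear_increment_le:
  fixes bl :: "'a::real_normed_vector \<Rightarrow> 'b::real_normed_vector \<Rightarrow> 'c::banach"
  assumes bb: "bounded_bilinear bl" and B: "\<And>p q. norm (bl p q) \<le> B * norm p * norm q"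
    and g: "(g has_integral G y - G x) {x..y}" and h: "(h has_integral H y - H x) {x..y}"
    and f: "(\<lambda>s. bl (g s) (H s) + bl (G s) (h s)) integrable_on {x..y}"
    and m: "(\<lambda>s. B * (norm (g s) + norm (h s))) integrable_on {x..y}"
    and osc: "\<And>s. s \<in> {x..y} \<Longrightarrow> norm (G x - G s) \<le> \<eta> \<and> norm (H y - H s) \<le> \<eta>"
    and "B \<ge> 0"
  shows "norm (bl (G y) (H y) - bl (G x) (H x) - integral {x..y} (\<lambda>s. bl (g s) (H s) + bl (G s) (h s)))
    \<le> \<eta> * integral {x..y} (\<lambda>s. B * (norm (g s) + norm (h s)))"
proof -
  let ?f = "\<lambda>s. bl (g s) (H s) + bl (G s) (h s)"
  let ?r = "\<lambda>s. bl (g s) (H y - H s) + bl (G x - G s) (h s)"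
  have "((\<lambda>s. bl (g s) (H y)) has_integral bl (G y - G x) (H y)) {x..y}"
    using has_integral_linear[OF g bounded_bilinear.bounded_linear_left[OF bb]] by (simp add: o_def)
  moreover have "((\<lambda>s. bl (G x) (h s)) has_integral bl (G x) (H y - H x)) {x..y}"
    using has_integral_linear[OF h bounded_bilinear.bounded_linear_right[OF bb]] by (simp add: o_def)
  ultimately have "((\<lambda>s. bl (g s) (H y) + bl (G x) (h s) - ?f s) has_integral
      bl (G y - G x) (H y) + bl (G x) (H y - H x) - integral {x..y} ?f) {x..y}"
    using f by (intro has_integral_diff has_integral_add integrable_integral)
  moreover have "(\<lambda>s. bl (g s) (H y) + bl (G x) (h s) - ?f s) = ?r"
    and "bl (G y - G x) (H y) + bl (G x) (H y - H x) = bl (G y) (H y) - bl (G x) (H x)"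
    by (simp_all add: fun_eq_iff bounded_bilinear.diff_left[OF bb]
        bounded_bilinear.diff_right[OF bb] algebra_simps)
  ultimately have r: "(?r has_integral bl (G y) (H y) - bl (G x) (H x) - integral {x..y} ?f) {x..y}"
    by simp
  have "norm (integral {x..y} ?r) \<le> integral {x..y} (\<lambda>s. \<eta> * (B * (norm (g s) + norm (h s))))"
  proof (rule integral_norm_bound_integral)
    show "?r integrable_on {x..y}" using r by blast
    show "(\<lambda>s. \<eta> * (B * (norm (g s) + norm (h s)))) integrable_on {x..y}"
      using m by (rule integrable_on_mult_right)
    fix s assume s: "s \<in> {x..y}"
    have "norm (?r s) \<le> B * norm (g s) * norm (H y - H s) + B * norm (G x - G s) * norm (h s)"
      by (rule norm_triangle_le[OF add_mono[OF B B]])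
    also have "\<dots> \<le> B * norm (g s) * \<eta> + B * \<eta> * norm (h s)"
      using osc[OF s] \<open>B \<ge> 0\<close> by (intro add_mono mult_left_mono mult_right_mono) auto
    finally show "norm (?r s) \<le> \<eta> * (B * (norm (g s) + norm (h s)))"
      by (simp add: algebra_simps)
  qed
  then show ?thesis
    using r m by (simp add: integral_unique)
qed

lemma primitive_on_bilinear:
  fixes bl :: "'a::euclidean_space \<Rightarrow> 'b::euclidean_space \<Rightarrow> 'c::euclidean_space"
  assumes bl: "bilinear bl"
    and g: "g absolutely_integrable_on {a..b}" and h: "h absolutely_integrable_on {a..b}"
    and G: "primitive_on a b g G" and H: "primitive_on a b h H"
  shows "primitive_on a b (\<lambda>s. bl (g s) (H s) + bl (G s) (h s)) (\<lambda>s. bl (G s) (H s))"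
proof -
  have bb: "bounded_bilinear bl" using bl by (simp add: bilinear_conv_bounded_bilinear)
  obtain B where "B > 0" and B: "\<And>p q. norm (bl p q) \<le> B * norm p * norm q"
    using bilinear_bounded_pos[OF bl] by blast
  have Gc: "continuous_on {a..b} G" using G by (rule primitive_on_continuous)
  have Hc: "continuous_on {a..b} H" using H by (rule primitive_on_continuous)
  have f: "(\<lambda>s. bl (g s) (H s) + bl (G s) (h s)) integrable_on {a..b}"
    using absolutely_integrable_bilinear_continuous_right[OF bl Hc g]
      absolutely_integrable_bilinear_continuous_left[OF bl Gc h]
    by (intro integrable_add) (simp_all add: absolutely_integrable_on_def)
  have m: "(\<lambda>s. B * (norm (g s) + norm (h s))) integrable_on {a..b}"
    using g h by (intro integrable_on_mult_right integrable_add) (simp_all add: absolutely_integrable_on_def)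
  show ?thesis
  proof (rule primitive_on_of_oscillation_bound[OF f m continuous_on_Pair[OF Gc Hc]])
    fix x y \<eta> assume xy: "a \<le> x" "x \<le> y" "y \<le> b"
      and osc: "\<And>s. s \<in> {x..y} \<Longrightarrow> dist (G x, H x) (G s, H s) \<le> \<eta> \<and> dist (G y, H y) (G s, H s) \<le> \<eta>"
    show "norm (bl (G y) (H y) - bl (G x) (H x) - integral {x..y} (\<lambda>s. bl (g s) (H s) + bl (G s) (h s)))
        \<le> \<eta> * integral {x..y} (\<lambda>s. B * (norm (g s) + norm (h s)))"
    proof (rule norm_bilinear_increment_le[OF bb B])
      show "(g has_integral G y - G x) {x..y}" "(h has_integral H y - H x) {x..y}"
        using xy by (auto intro: primitive_onD[OF G] primitive_onD[OF H])
      show "norm (G x - G s) \<le> \<eta> \<and> norm (H y - H s) \<le> \<eta>" if "s \<in> {x..y}" for s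
        using osc[OF that] dist_fst_le[of "(G x, H x)" "(G s, H s)"] dist_snd_le[of "(G y, H y)" "(G s, H s)"]
        by (auto simp: dist_norm)
    qed (use f m xy \<open>B > 0\<close> in \<open>auto intro: integrable_subinterval_real\<close>)
  qed
qed

lemma MVT2_unordered:
  fixes f :: "real \<Rightarrow> real"
  assumes "\<And>x. (f has_real_derivative f' x) (at x)"
  obtains \<xi> where "\<bar>\<xi> - a\<bar> \<le> \<bar>b - a\<bar>" "f b - f a = f' \<xi> * (b - a)"
proof (cases a b rule: linorder_cases)
  case less
  then obtain z where "a < z" "z < b" "f b - f a = (b - a) * f' z"
    using MVT2[OF less assms] by blast
  then show ?thesis by (intro that[of z]) auto
next
  case greater
  then obtain z where "b < z" "z < a" "f a - f b = (a - b) * f' z"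
    using MVT2[OF greater assms] by blast
  then show ?thesis by (intro that[of z]) (auto simp: algebra_simps)
qed (use that in auto)

lemma lipschitz_on_sin: "1-lipschitz_on UNIV (sin :: real \<Rightarrow> real)"
proof -
  have "dist (sin x) (sin y) \<le> 1 * dist x y" for x y :: real
  proof -
    obtain z where "sin x - sin y = cos z * (x - y)" using MVT2_unordered[OF DERIV_sin] by metis
    then show ?thesis
      using abs_cos_le_one[of z] by (simp add: dist_real_def abs_mult mult_left_le_one_le)
  qed
  then show ?thesis by (intro lipschitz_onI) auto
qed

lemma lipschitz_on_cos: "1-lipschitz_on UNIV (cos :: real \<Rightarrow> real)"
proof -
  have "dist (cos x) (cos y) \<le> 1 * dist x y" for x y :: real
  proof -
    obtain z where "cos x - cos y = - sin z * (x - y)" using MVT2_unordered[OF DERIV_cos] by metis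
    then show ?thesis
      using abs_sin_le_one[of z] by (simp add: dist_real_def abs_mult mult_left_le_one_le)
  qed
  then show ?thesis by (intro lipschitz_onI) auto
qed

lemma norm_compose_increment_le:
  fixes \<phi> \<phi>' \<theta> \<beta> :: "real \<Rightarrow> real"
  assumes der: "\<And>x. (\<phi> has_real_derivative \<phi>' x) (at x)" and lip: "L-lipschitz_on UNIV \<phi>'"
    and \<beta>: "(\<beta> has_integral \<theta> y - \<theta> x) {x..y}"
    and f: "(\<lambda>s. \<phi>' (\<theta> s) * \<beta> s) integrable_on {x..y}"
    and m: "(\<lambda>s. 2 * L * norm (\<beta> s)) integrable_on {x..y}"
    and osc: "\<And>s. s \<in> {x..y} \<Longrightarrow> \<bar>\<theta> x - \<theta> s\<bar> \<le> \<eta>" and "x \<le> y"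
  shows "norm (\<phi> (\<theta> y) - \<phi> (\<theta> x) - integral {x..y} (\<lambda>s. \<phi>' (\<theta> s) * \<beta> s))
    \<le> \<eta> * integral {x..y} (\<lambda>s. 2 * L * norm (\<beta> s))"
proof -
  let ?f = "\<lambda>s. \<phi>' (\<theta> s) * \<beta> s"
  obtain \<xi> where \<xi>: "\<bar>\<xi> - \<theta> x\<bar> \<le> \<bar>\<theta> y - \<theta> x\<bar>" "\<phi> (\<theta> y) - \<phi> (\<theta> x) = \<phi>' \<xi> * (\<theta> y - \<theta> x)"
    using MVT2_unordered[OF der] by metis
  have "((\<lambda>s. \<phi>' \<xi> * \<beta> s - ?f s) has_integral \<phi> (\<theta> y) - \<phi> (\<theta> x) - integral {x..y} ?f) {x..y}"
    unfolding \<xi>(2) using f by (intro has_integral_diff has_integral_mult_right \<beta> integrable_integral)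
  moreover have "norm (integral {x..y} (\<lambda>s. \<phi>' \<xi> * \<beta> s - ?f s))
      \<le> integral {x..y} (\<lambda>s. \<eta> * (2 * L * norm (\<beta> s)))"
  proof (rule integral_norm_bound_integral)
    show "(\<lambda>s. \<phi>' \<xi> * \<beta> s - ?f s) integrable_on {x..y}"
      using calculation by blast
    show "(\<lambda>s. \<eta> * (2 * L * norm (\<beta> s))) integrable_on {x..y}"
      using m by (rule integrable_on_mult_right)
    fix s assume s: "s \<in> {x..y}"
    have "\<bar>\<phi>' \<xi> - \<phi>' (\<theta> s)\<bar> \<le> L * \<bar>\<xi> - \<theta> s\<bar>"
      using lipschitz_onD[OF lip] by (simp add: dist_real_def)
    also have "\<dots> \<le> L * (2 * \<eta>)"
      using \<xi>(1) osc[OF s] osc[of y] \<open>x \<le> y\<close> lipschitz_on_nonneg[OF lip]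
      by (intro mult_left_mono) auto
    finally have "\<bar>\<phi>' \<xi> - \<phi>' (\<theta> s)\<bar> * \<bar>\<beta> s\<bar> \<le> L * (2 * \<eta>) * \<bar>\<beta> s\<bar>"
      by (rule mult_right_mono) simp
    moreover have "norm (\<phi>' \<xi> * \<beta> s - ?f s) = \<bar>\<phi>' \<xi> - \<phi>' (\<theta> s)\<bar> * \<bar>\<beta> s\<bar>"
      by (simp add: abs_mult left_diff_distrib[symmetric])
    ultimately show "norm (\<phi>' \<xi> * \<beta> s - ?f s) \<le> \<eta> * (2 * L * norm (\<beta> s))"
      by (simp add: mult_ac)
  qed
  ultimately show ?thesis
    using m by (simp add: integral_unique)
qed

lemma primitive_on_compose:
  fixes \<phi> \<phi>' \<theta> \<beta> :: "real \<Rightarrow> real"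
  assumes der: "\<And>x. (\<phi> has_real_derivative \<phi>' x) (at x)" and lip: "L-lipschitz_on UNIV \<phi>'"
    and \<beta>: "\<beta> absolutely_integrable_on {a..b}" and \<theta>: "primitive_on a b \<beta> \<theta>"
  shows "primitive_on a b (\<lambda>s. \<phi>' (\<theta> s) * \<beta> s) (\<lambda>s. \<phi> (\<theta> s))"
proof -
  have \<theta>c: "continuous_on {a..b} \<theta>" using \<theta> by (rule primitive_on_continuous)
  have "continuous_on {a..b} (\<lambda>s. \<phi>' (\<theta> s))"
    by (rule continuous_on_compose2[OF lipschitz_on_continuous_on[OF lip] \<theta>c]) auto
  then have f: "(\<lambda>s. \<phi>' (\<theta> s) * \<beta> s) integrable_on {a..b}"
    using absolutely_integrable_bilinear_continuous_left[OF bilinear_times _ \<beta>]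
    by (simp add: absolutely_integrable_on_def)
  have m: "(\<lambda>s. 2 * L * norm (\<beta> s)) integrable_on {a..b}"
    using \<beta> by (intro integrable_on_mult_right) (simp add: absolutely_integrable_on_def)
  show ?thesis
  proof (rule primitive_on_of_oscillation_bound[OF f m \<theta>c])
    fix x y \<eta> assume xy: "a \<le> x" "x \<le> y" "y \<le> b"
      and osc: "\<And>s. s \<in> {x..y} \<Longrightarrow> dist (\<theta> x) (\<theta> s) \<le> \<eta> \<and> dist (\<theta> y) (\<theta> s) \<le> \<eta>"
    show "norm (\<phi> (\<theta> y) - \<phi> (\<theta> x) - integral {x..y} (\<lambda>s. \<phi>' (\<theta> s) * \<beta> s))
        \<le> \<eta> * integral {x..y} (\<lambda>s. 2 * L * norm (\<beta> s))"
    proof (rule norm_compose_increment_le[OF der lip primitive_onD[OF \<theta> xy]])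
      show "\<bar>\<theta> x - \<theta> s\<bar> \<le> \<eta>" if "s \<in> {x..y}" for s
        using osc[OF that] by (simp add: dist_real_def)
    qed (use f m xy in \<open>auto intro: integrable_subinterval_real\<close>)
  qed
qed

section \<open>Rotations about the coordinate axes\<close>

definition rot3 :: "real \<Rightarrow> real^3^3" where
  "rot3 \<theta> = vector [vector [cos \<theta>, - sin \<theta>, 0], vector [sin \<theta>, cos \<theta>, 0], vector [0, 0, 1]]"

definition rot2 :: "real \<Rightarrow> real^3^3" where
  "rot2 \<theta> = vector [vector [cos \<theta>, 0, sin \<theta>], vector [0, 1, 0], vector [- sin \<theta>, 0, cos \<theta>]]"

lemmas matrix3_simps = vec_eq_iff forall_3 matrix_matrix_mult_def matrix_vector_mult_def sum_3 mat_def
  E1_def E2_def E3_def rot2_def rot3_def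

lemma rot3_Rodrigues: "rot3 \<theta> = mat 1 + sin \<theta> *\<^sub>R E3 + (1 - cos \<theta>) *\<^sub>R (E3 ** E3)"
  by (simp add: matrix3_simps)

lemma rot2_Rodrigues: "rot2 \<theta> = mat 1 + sin \<theta> *\<^sub>R E2 + (1 - cos \<theta>) *\<^sub>R (E2 ** E2)"
  by (simp add: matrix3_simps)

lemma rot3_mult_E3: "rot3 \<theta> ** E3 = cos \<theta> *\<^sub>R E3 + sin \<theta> *\<^sub>R (E3 ** E3)"
  by (simp add: matrix3_simps)

lemma rot3_0: "rot3 0 = mat 1"
  by (simp add: matrix3_simps)

lemma rot3_add: "rot3 \<alpha> ** rot3 \<beta> = rot3 (\<alpha> + \<beta>)"
  by (simp add: matrix3_simps cos_add sin_add algebra_simps)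

lemma Ctilde_eq_mult_rot3: "Ctilde C v = C ** rot3 v"
  by (simp add: matrix3_simps Ctilde_def)

lemma norm_rot2_mult: "norm (rot2 \<theta> *v u) = norm u"
proof -
  have "(rot2 \<theta> *v u) \<bullet> (rot2 \<theta> *v u)
      = (cos \<theta> * u$1 + sin \<theta> * u$3)\<^sup>2 + (u$2)\<^sup>2 + (cos \<theta> * u$3 - sin \<theta> * u$1)\<^sup>2"
    by (simp add: matrix3_simps inner_vec_def power2_eq_square algebra_simps)
  also have "\<dots> = (u$1)\<^sup>2 + (u$2)\<^sup>2 + (u$3)\<^sup>2"
    using sin_cos_squared_add[of \<theta>] by algebra
  also have "\<dots> = u \<bullet> u"
    by (simp add: inner_vec_def sum_3 power2_eq_square)
  finally show ?thesis by (simp add: norm_eq_sqrt_inner)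
qed

lemma rot2_mult_nth_2: "(rot2 \<theta> *v u) $ 2 = u $ 2"
  by (simp add: matrix3_simps)

lemma primitive_on_rot3:
  assumes \<beta>: "\<beta> absolutely_integrable_on {a..b}" and \<theta>: "primitive_on a b \<beta> \<theta>"
  shows "primitive_on a b (\<lambda>s. \<beta> s *\<^sub>R (rot3 (\<theta> s) ** E3)) (\<lambda>s. rot3 (\<theta> s))"
proof -
  have "((\<lambda>x. 1 - cos x) has_real_derivative sin x) (at x)" for x :: real
    by (auto intro!: derivative_eq_intros)
  then have "primitive_on a b (\<lambda>s. sin (\<theta> s) * \<beta> s) (\<lambda>s. 1 - cos (\<theta> s))"
    by (rule primitive_on_compose[OF _ lipschitz_on_sin \<beta> \<theta>])
  moreover have "primitive_on a b (\<lambda>s. cos (\<theta> s) * \<beta> s) (\<lambda>s. sin (\<theta> s))"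
    by (rule primitive_on_compose[OF DERIV_sin lipschitz_on_cos \<beta> \<theta>])
  ultimately have "primitive_on a b
      (\<lambda>s. (cos (\<theta> s) * \<beta> s) *\<^sub>R E3 + (sin (\<theta> s) * \<beta> s) *\<^sub>R (E3 ** E3))
      (\<lambda>s. mat 1 + (sin (\<theta> s) *\<^sub>R E3 + (1 - cos (\<theta> s)) *\<^sub>R (E3 ** E3)))"
    by (intro primitive_on_add_const primitive_on_add primitive_on_scaleR_left)
  moreover have "\<beta> s *\<^sub>R (rot3 (\<theta> s) ** E3)
      = (cos (\<theta> s) * \<beta> s) *\<^sub>R E3 + (sin (\<theta> s) * \<beta> s) *\<^sub>R (E3 ** E3)" for s
    by (simp add: rot3_mult_E3 algebra_simps)
  ultimately show ?thesis
    unfolding rot3_Rodrigues by (simp add: add.assoc)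
qed

section \<open>The two frames are gauge equivalent\<close>

definition frame1 :: "real^3 \<Rightarrow> real^3^3" where
  "frame1 u = u$1 *\<^sub>R E1 + u$2 *\<^sub>R (- E3) + u$3 *\<^sub>R E2"

definition frame2 :: "real^3 \<Rightarrow> real^3^3" where
  "frame2 u = u$1 *\<^sub>R E1 + u$3 *\<^sub>R E2"

lemma rho1_eq_sr_dist: "rho1 = sr_dist frame1 (\<lambda>u. u$2)"
  by (simp add: rho1_def frame1_def[abs_def])

lemma rho2_eq_sr_dist: "rho2 = sr_dist frame2 (\<lambda>u. u$2)"
  by (simp add: rho2_def frame2_def[abs_def])

lemma linear_frame1: "linear frame1"
  by (simp add: linear_iff frame1_def algebra_simps)

lemma linear_frame2: "linear frame2"
  by (simp add: linear_iff frame2_def algebra_simps)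

lemma frame1_gauge: "frame1 u ** rot3 \<theta> + u$2 *\<^sub>R (rot3 \<theta> ** E3) = rot3 \<theta> ** frame2 (rot2 \<theta> *v u)"
  by (simp add: matrix3_simps frame1_def frame2_def) (use sin_cos_squared_add[of \<theta>] in algebra)

lemma frame2_gauge: "frame2 u ** rot3 \<theta> - u$2 *\<^sub>R (rot3 \<theta> ** E3) = rot3 \<theta> ** frame1 (rot2 \<theta> *v u)"
  by (simp add: matrix3_simps frame1_def frame2_def) (use sin_cos_squared_add[of \<theta>] in algebra)

lemma primitive_on_mult_rot3:
  fixes C P :: "real \<Rightarrow> real^3^3"
  assumes P: "P absolutely_integrable_on {a..b}" and C: "primitive_on a b (\<lambda>s. C s ** P s) C"
    and \<beta>: "\<beta> absolutely_integrable_on {a..b}" and \<theta>: "primitive_on a b \<beta> \<theta>"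
  shows "primitive_on a b (\<lambda>s. C s ** (P s ** rot3 (\<theta> s) + \<beta> s *\<^sub>R (rot3 (\<theta> s) ** E3)))
    (\<lambda>s. C s ** rot3 (\<theta> s))"
proof -
  have "continuous_on {a..b} C" using C by (rule primitive_on_continuous)
  then have CP: "(\<lambda>s. C s ** P s) absolutely_integrable_on {a..b}"
    by (rule absolutely_integrable_bilinear_continuous_left[OF bilinear_matrix_matrix_mult _ P])
  have R: "primitive_on a b (\<lambda>s. \<beta> s *\<^sub>R (rot3 (\<theta> s) ** E3)) (\<lambda>s. rot3 (\<theta> s))"
    by (rule primitive_on_rot3[OF \<beta> \<theta>])
  have "continuous_on {a..b} \<theta>" using \<theta> by (rule primitive_on_continuous)
  then have "continuous_on {a..b} (\<lambda>s. rot3 (\<theta> s) ** E3)"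
    unfolding rot3_mult_E3 by (intro continuous_intros)
  then have "(\<lambda>s. \<beta> s *\<^sub>R (rot3 (\<theta> s) ** E3)) absolutely_integrable_on {a..b}"
    by (rule absolutely_integrable_bilinear_continuous_right[OF bilinear_scaleR _ \<beta>])
  from primitive_on_bilinear[OF bilinear_matrix_matrix_mult CP this C R]
  show ?thesis
    by (simp add: matrix_add_ldistrib matrix_mul_assoc)
qed

lemma horizontal_iff_primitive_on:
  "horizontal A b C v u \<longleftrightarrow> u absolutely_integrable_on {0..1} \<and>
    primitive_on 0 1 (\<lambda>s. C s ** A (u s)) C \<and> primitive_on 0 1 (\<lambda>s. b (u s)) v"
  by (auto simp: horizontal_def primitive_on_def)

lemma horizontal_mult_rot3:
  fixes A B :: "real^3 \<Rightarrow> real^3^3"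
  assumes hz: "horizontal A (\<lambda>u. u$2) C v u" and A: "linear A"
    and gauge: "\<And>u \<theta>. A u ** rot3 \<theta> + (\<sigma> * u$2) *\<^sub>R (rot3 \<theta> ** E3) = rot3 \<theta> ** B (rot2 \<theta> *v u)"
  shows "horizontal B (\<lambda>u. u$2) (\<lambda>t. C t ** rot3 (\<sigma> * v t)) v (\<lambda>t. rot2 (\<sigma> * v t) *v u t)"
proof -
  have u: "u absolutely_integrable_on {0..1}"
    and C: "primitive_on 0 1 (\<lambda>s. C s ** A (u s)) C" and v: "primitive_on 0 1 (\<lambda>s. u s $ 2) v"
    using hz by (simp_all add: horizontal_iff_primitive_on)
  have u2: "(\<lambda>s. u s $ 2) absolutely_integrable_on {0..1}"
    using absolutely_integrable_linear[OF u bounded_linear_vec_nth] by (simp add: o_def)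
  have \<beta>: "(\<lambda>s. \<sigma> * u s $ 2) absolutely_integrable_on {0..1}"
    using absolutely_integrable_scaleR_left[OF u2, of \<sigma>] by simp
  have \<theta>: "primitive_on 0 1 (\<lambda>s. \<sigma> * u s $ 2) (\<lambda>s. \<sigma> * v s)"
    using v by (auto simp: primitive_on_def right_diff_distrib[symmetric] intro: has_integral_mult_right)
  have P: "(\<lambda>s. A (u s)) absolutely_integrable_on {0..1}"
    using absolutely_integrable_linear[OF u A[unfolded linear_conv_bounded_linear]] by (simp add: o_def)
  have "primitive_on 0 1 (\<lambda>s. (C s ** rot3 (\<sigma> * v s)) ** B (rot2 (\<sigma> * v s) *v u s))
      (\<lambda>s. C s ** rot3 (\<sigma> * v s))"
    using primitive_on_mult_rot3[OF P C \<beta> \<theta>] by (simp add: gauge matrix_mul_assoc)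
  moreover have "continuous_on {0..1} (\<lambda>s. rot2 (\<sigma> * v s))"
    unfolding rot2_Rodrigues using primitive_on_continuous[OF v] by (intro continuous_intros)
  then have "(\<lambda>s. rot2 (\<sigma> * v s) *v u s) absolutely_integrable_on {0..1}"
    by (rule absolutely_integrable_bilinear_continuous_left[OF bilinear_matrix_vector_mult _ u])
  ultimately show ?thesis
    using v by (simp add: horizontal_iff_primitive_on rot2_mult_nth_2)
qed

lemma horizontal_frame1_mult_rot3:
  assumes "horizontal frame1 (\<lambda>u. u$2) C v u"
  shows "horizontal frame2 (\<lambda>u. u$2) (\<lambda>t. C t ** rot3 (v t)) v (\<lambda>t. rot2 (v t) *v u t)"
  using horizontal_mult_rot3[of frame1 C v u 1 frame2] assms linear_frame1 frame1_gauge by simp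

lemma horizontal_frame2_mult_rot3:
  assumes "horizontal frame2 (\<lambda>u. u$2) C v u"
  shows "horizontal frame1 (\<lambda>u. u$2) (\<lambda>t. C t ** rot3 (- v t)) v (\<lambda>t. rot2 (- v t) *v u t)"
  using horizontal_mult_rot3[of frame2 C v u "-1" frame1] assms linear_frame2 frame2_gauge by simp

lemma sr_dist_lengths_subset:
  assumes curves: "\<And>C v u. horizontal A b C v u \<Longrightarrow> C 0 = mat 1 \<Longrightarrow> v 0 = 0 \<Longrightarrow> C 1 = C1 \<Longrightarrow> v 1 = v1 \<Longrightarrow>
      \<exists>C' v' u'. horizontal A' b' C' v' u' \<and> C' 0 = mat 1 \<and> v' 0 = 0 \<and> C' 1 = C1' \<and> v' 1 = v1'
        \<and> (\<forall>s. norm (u' s) = norm (u s))"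
  shows "{integral {0..1} (\<lambda>s. norm (u s)) | C v u. horizontal A b C v u \<and>
        C 0 = mat 1 \<and> v 0 = 0 \<and> C 1 = C1 \<and> v 1 = v1}
      \<subseteq> {integral {0..1} (\<lambda>s. norm (u s)) | C v u. horizontal A' b' C v u \<and>
        C 0 = mat 1 \<and> v 0 = 0 \<and> C 1 = C1' \<and> v 1 = v1'}" (is "?L \<subseteq> ?R")
proof
  fix x assume "x \<in> ?L"
  then obtain C v u where x: "x = integral {0..1} (\<lambda>s. norm (u s))"
    and "horizontal A b C v u" "C 0 = mat 1" "v 0 = 0" "C 1 = C1" "v 1 = v1"
    by blast
  then obtain C' v' u' where "horizontal A' b' C' v' u'" "C' 0 = mat 1" "v' 0 = 0" "C' 1 = C1'"
    "v' 1 = v1'" and "\<forall>s. norm (u' s) = norm (u s)"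
    using curves by blast
  moreover from this(6) have "x = integral {0..1} (\<lambda>s. norm (u' s))"
    unfolding x by simp
  ultimately show "x \<in> ?R" by blast
qed

lemma sr_dist_eqI:
  assumes "\<And>C v u. horizontal A b C v u \<Longrightarrow> C 0 = mat 1 \<Longrightarrow> v 0 = 0 \<Longrightarrow> C 1 = C1 \<Longrightarrow> v 1 = v1 \<Longrightarrow>
      \<exists>C' v' u'. horizontal A' b' C' v' u' \<and> C' 0 = mat 1 \<and> v' 0 = 0 \<and> C' 1 = C1' \<and> v' 1 = v1'
        \<and> (\<forall>s. norm (u' s) = norm (u s))"
    and "\<And>C v u. horizontal A' b' C v u \<Longrightarrow> C 0 = mat 1 \<Longrightarrow> v 0 = 0 \<Longrightarrow> C 1 = C1' \<Longrightarrow> v 1 = v1' \<Longrightarrow>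
      \<exists>C' v' u'. horizontal A b C' v' u' \<and> C' 0 = mat 1 \<and> v' 0 = 0 \<and> C' 1 = C1 \<and> v' 1 = v1
        \<and> (\<forall>s. norm (u' s) = norm (u s))"
  shows "sr_dist A b C1 v1 = sr_dist A' b' C1' v1'"
  unfolding sr_dist_def
  by (intro arg_cong[where f = Inf] subset_antisym sr_dist_lengths_subset assms)

theorem proposition14:
  fixes C :: "real^3^3" and v :: real
  assumes "orthogonal_matrix C" and "det C = 1"
  shows "rho1 C v = rho2 (Ctilde C v) v"
  unfolding rho1_eq_sr_dist rho2_eq_sr_dist
proof (rule sr_dist_eqI)
  fix D w u
  assume "horizontal frame1 (\<lambda>u. u$2) D w u" "D 0 = mat 1" "w 0 = 0" "D 1 = C" "w 1 = v"
  then show "\<exists>D' w' u'. horizontal frame2 (\<lambda>u. u$2) D' w' u' \<and>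
      D' 0 = mat 1 \<and> w' 0 = 0 \<and> D' 1 = Ctilde C v \<and> w' 1 = v \<and> (\<forall>s. norm (u' s) = norm (u s))"
    using horizontal_frame1_mult_rot3 by (fastforce simp: Ctilde_eq_mult_rot3 rot3_0 norm_rot2_mult)
next
  fix D w u
  assume "horizontal frame2 (\<lambda>u. u$2) D w u" "D 0 = mat 1" "w 0 = 0" "D 1 = Ctilde C v" "w 1 = v"
  moreover have "C ** rot3 v ** rot3 (- v) = C"
    by (simp add: rot3_add rot3_0 flip: matrix_mul_assoc)
  ultimately show "\<exists>D' w' u'. horizontal frame1 (\<lambda>u. u$2) D' w' u' \<and>
      D' 0 = mat 1 \<and> w' 0 = 0 \<and> D' 1 = C \<and> w' 1 = v \<and> (\<forall>s. norm (u' s) = norm (u s))"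
    using horizontal_frame2_mult_rot3 by (fastforce simp: Ctilde_eq_mult_rot3 rot3_0 norm_rot2_mult)
qed

end
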